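(* Let $\mathbf{C}$ be an adhesive category. Consider a commutative diagram consisting of two vertically stacked squares: square (3) with morphisms $z:Z'\to Z$, $w:Z\to Y$, $w':Z'\to Y'$, $y:Y'\to Y$ satisfying $w\circ z=y\circ w'$, and square (4) with morphisms $y:Y'\to Y$, $v:Y\to X$, $v':Y'\to X'$, $x:X'\to X$ satisfying $v\circ y=x\circ v'$. Suppose that $z,w,w',y,v',x$ are monomorphisms, that $v\circ w$ is a monomorphism, that square (3) is a pushout (i.e. $(Y,w,y)$ is a pushout of $Z\xleftarrow{z}Z'\xrightarrow{w'}Y'$), and that the composite square (3)+(4) is an FPC, i.e. $(x,\ v'\circ w')$ is an FPC of $(v\circ w,\ z)$. Then square (4) is an FPC, i.e. $(x,v')$ is an FPC of $(v,y)$, and $v$ is a monomorphism.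
   Context: A category is adhesive if it has pushouts along monomorphisms, has pullbacks, and pushouts along monomorphisms are van Kampen squares. Final pullback complement (FPC): given morphisms $a:A\to B$ and $c:B\to C$, a pair $(d:D\to C,\ b:A\to D)$ is an FPC of $(c,a)$ if $c\circ a=d\circ b$, this square is a pullback (i.e. $(A,a,b)$ is a pullback of $(c,d)$), and for all morphisms $x_0:E\to B$, $y_0:E\to F$, $z_0:F\to C$, $w_0:E\to A$ such that $(E,x_0,y_0)$ is a pullback of $(c,z_0)$ and $a\circ w_0=x_0$, there exists a unique $w^*:F\to D$ with $d\circ w^*=z_0$ and $w^*\circ y_0=b\circ w_0$. *)

theory Defs
  imports Main
begin

text \<open>A (small) category given explicitly: objects, arrows, domain, codomain,
identities and composition. \<open>Comp C g f\<close> denotes \<open>g \<circ> f\<close> (first f, then g).\<close>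

record ('o, 'a) cat =
  Ob :: "'o set"
  Ar :: "'a set"
  Dom :: "'a \<Rightarrow> 'o"
  Cod :: "'a \<Rightarrow> 'o"
  Id :: "'o \<Rightarrow> 'a"
  Comp :: "'a \<Rightarrow> 'a \<Rightarrow> 'a"

definition arr :: "('o, 'a) cat \<Rightarrow> 'a \<Rightarrow> 'o \<Rightarrow> 'o \<Rightarrow> bool" where
  "arr C f X Y \<longleftrightarrow> f \<in> Ar C \<and> Dom C f = X \<and> Cod C f = Y"

definition category :: "('o, 'a) cat \<Rightarrow> bool" where
  "category C \<longleftrightarrow>
     (\<forall>f \<in> Ar C. Dom C f \<in> Ob C \<and> Cod C f \<in> Ob C) \<and>
     (\<forall>X \<in> Ob C. arr C (Id C X) X X) \<and>
     (\<forall>f g. f \<in> Ar C \<and> g \<in> Ar C \<and> Cod C f = Dom C g \<longrightarrow>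
        arr C (Comp C g f) (Dom C f) (Cod C g)) \<and>
     (\<forall>f \<in> Ar C. Comp C f (Id C (Dom C f)) = f \<and> Comp C (Id C (Cod C f)) f = f) \<and>
     (\<forall>f g h. f \<in> Ar C \<and> g \<in> Ar C \<and> h \<in> Ar C \<and> Cod C f = Dom C g \<and> Cod C g = Dom C h \<longrightarrow>
        Comp C h (Comp C g f) = Comp C (Comp C h g) f)"

definition mono :: "('o, 'a) cat \<Rightarrow> 'a \<Rightarrow> bool" where
  "mono C m \<longleftrightarrow> m \<in> Ar C \<and>
     (\<forall>g h. g \<in> Ar C \<and> h \<in> Ar C \<and> Cod C g = Dom C m \<and> Cod C h = Dom C m \<and>
        Dom C g = Dom C h \<and> Comp C m g = Comp C m h \<longrightarrow> g = h)"

text \<open>\<open>pullback C c d a b\<close>: \<open>(A, a, b)\<close> is a pullback of the cospan \<open>(c, d)\<close>,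
  where \<open>c : B \<rightarrow> T\<close>, \<open>d : D \<rightarrow> T\<close>, \<open>a : A \<rightarrow> B\<close>, \<open>b : A \<rightarrow> D\<close>.\<close>
definition pullback :: "('o, 'a) cat \<Rightarrow> 'a \<Rightarrow> 'a \<Rightarrow> 'a \<Rightarrow> 'a \<Rightarrow> bool" where
  "pullback C c d a b \<longleftrightarrow>
     c \<in> Ar C \<and> d \<in> Ar C \<and> a \<in> Ar C \<and> b \<in> Ar C \<and>
     Cod C c = Cod C d \<and> Cod C a = Dom C c \<and> Cod C b = Dom C d \<and> Dom C a = Dom C b \<and>
     Comp C c a = Comp C d b \<and>
     (\<forall>p q. p \<in> Ar C \<and> q \<in> Ar C \<and> Cod C p = Dom C c \<and> Cod C q = Dom C d \<and>
        Dom C p = Dom C q \<and> Comp C c p = Comp C d q \<longrightarrow>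
        (\<exists>!u. arr C u (Dom C p) (Dom C a) \<and> Comp C a u = p \<and> Comp C b u = q))"

text \<open>\<open>pushout C f g h k\<close>: \<open>(Q, h, k)\<close> is a pushout of the span \<open>B \<leftarrow>f A \<rightarrow>g D\<close>,
  where \<open>h : B \<rightarrow> Q\<close>, \<open>k : D \<rightarrow> Q\<close> and \<open>h \<circ> f = k \<circ> g\<close>.\<close>
definition pushout :: "('o, 'a) cat \<Rightarrow> 'a \<Rightarrow> 'a \<Rightarrow> 'a \<Rightarrow> 'a \<Rightarrow> bool" where
  "pushout C f g h k \<longleftrightarrow>
     f \<in> Ar C \<and> g \<in> Ar C \<and> h \<in> Ar C \<and> k \<in> Ar C \<and>
     Dom C f = Dom C g \<and> Dom C h = Cod C f \<and> Dom C k = Cod C g \<and> Cod C h = Cod C k \<and>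
     Comp C h f = Comp C k g \<and>
     (\<forall>p q. p \<in> Ar C \<and> q \<in> Ar C \<and> Dom C p = Cod C f \<and> Dom C q = Cod C g \<and>
        Cod C p = Cod C q \<and> Comp C p f = Comp C q g \<longrightarrow>
        (\<exists>!u. arr C u (Cod C h) (Cod C p) \<and> Comp C u h = p \<and> Comp C u k = q))"

definition has_pullbacks :: "('o, 'a) cat \<Rightarrow> bool" where
  "has_pullbacks C \<longleftrightarrow>
     (\<forall>c d. c \<in> Ar C \<and> d \<in> Ar C \<and> Cod C c = Cod C d \<longrightarrow> (\<exists>a b. pullback C c d a b))"

definition has_pushouts_along_monos :: "('o, 'a) cat \<Rightarrow> bool" where
  "has_pushouts_along_monos C \<longleftrightarrow>
     (\<forall>f g. f \<in> Ar C \<and> g \<in> Ar C \<and> Dom C f = Dom C g \<and> (mono C f \<or> mono C g) \<longrightarrow>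
        (\<exists>h k. pushout C f g h k))"

text \<open>The bottom face is the pushout square
  \<open>h \<circ> f = k \<circ> g\<close> (\<open>f : A \<rightarrow> B\<close>, \<open>g : A \<rightarrow> D\<close>, \<open>h : B \<rightarrow> Q\<close>, \<open>k : D \<rightarrow> Q\<close>).\<close>
definition van_kampen :: "('o, 'a) cat \<Rightarrow> 'a \<Rightarrow> 'a \<Rightarrow> 'a \<Rightarrow> 'a \<Rightarrow> bool" where
  "van_kampen C f g h k \<longleftrightarrow> pushout C f g h k \<and>
     (\<forall>f' g' h' k' a b c d.
        arr C a (Dom C f') (Dom C f) \<and> arr C b (Cod C f') (Cod C f) \<and>
        arr C c (Cod C g') (Cod C g) \<and> arr C d (Cod C h') (Cod C h) \<and>
        f' \<in> Ar C \<and> g' \<in> Ar C \<and> h' \<in> Ar C \<and> k' \<in> Ar C \<and>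
        Dom C g' = Dom C f' \<and> Dom C h' = Cod C f' \<and> Dom C k' = Cod C g' \<and>
        Cod C k' = Cod C h' \<and>
        Comp C h' f' = Comp C k' g' \<and>
        Comp C f a = Comp C b f' \<and> Comp C g a = Comp C c g' \<and>
        Comp C h b = Comp C d h' \<and> Comp C k c = Comp C d k' \<and>
        pullback C f b a f' \<and> pullback C g c a g' \<longrightarrow>
        (pushout C f' g' h' k' \<longleftrightarrow> pullback C h d b h' \<and> pullback C k d c k'))"

definition adhesive :: "('o, 'a) cat \<Rightarrow> bool" where
  "adhesive C \<longleftrightarrow> category C \<and> has_pullbacks C \<and> has_pushouts_along_monos C \<and>
     (\<forall>f g h k. pushout C f g h k \<and> (mono C f \<or> mono C g) \<longrightarrow> van_kampen C f g h k)"

text \<open>Final pullback complement: \<open>fpc C c a d b\<close> means \<open>(d, b)\<close> is an FPC of \<open>(c, a)\<close>,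
  for \<open>a : A \<rightarrow> B\<close>, \<open>c : B \<rightarrow> T\<close>, \<open>d : D \<rightarrow> T\<close>, \<open>b : A \<rightarrow> D\<close>.\<close>
definition fpc :: "('o, 'a) cat \<Rightarrow> 'a \<Rightarrow> 'a \<Rightarrow> 'a \<Rightarrow> 'a \<Rightarrow> bool" where
  "fpc C c a d b \<longleftrightarrow>
     a \<in> Ar C \<and> c \<in> Ar C \<and> d \<in> Ar C \<and> b \<in> Ar C \<and>
     Cod C a = Dom C c \<and> Cod C d = Cod C c \<and> Dom C b = Dom C a \<and> Cod C b = Dom C d \<and>
     Comp C c a = Comp C d b \<and>
     pullback C c d a b \<and>
     (\<forall>x0 y0 z0 w0.
        arr C x0 (Dom C x0) (Cod C a) \<and> arr C y0 (Dom C x0) (Cod C y0) \<and>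
        arr C z0 (Cod C y0) (Cod C c) \<and> arr C w0 (Dom C x0) (Dom C a) \<and>
        pullback C c z0 x0 y0 \<and> Comp C a w0 = x0 \<longrightarrow>
        (\<exists>!ws. arr C ws (Cod C y0) (Dom C d) \<and> Comp C d ws = z0 \<and>
               Comp C ws y0 = Comp C b w0))"

end

theory Submission
  imports Defs
begin

(* Pushouts along monomorphisms in an adhesive category are pullbacks and are stable under
   pullback. Pulling the pushout (3) back along an arrow s into Y therefore covers the domain of s
   by two jointly epimorphic arrows along which s factors through w and through y, so statements
   about s can be checked separately on a "w-piece" and a "y-piece".
   Square (4) is a pullback: a cone over (v, x) is lifted on the w-piece through the pullback
   underlying the composite FPC, on the y-piece because x is mono, and the two lifts are glued
   along the pushout. Monicity of v is checked the same way: on the w-piece because v \<circ> w is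
   mono, on the y-piece because (4) is a pullback and v' is mono. Finally, as x is mono, the FPC
   property of (4) only asks that the bottom arrow z0 of a test pullback over x0 = y \<circ> w0
   factor through x; pulling the test cone back along w and factoring through (3), now known to
   be a pullback, yields a test cone for the composite FPC, which supplies the factorisation. *)

locale cat =
  fixes C :: "('o, 'a) cat"
  assumes category: "category C"
begin

abbreviation comp (infixr "\<cdot>" 55) where "g \<cdot> f \<equiv> Comp C g f"

lemma comp_arr [simp]: "f \<in> Ar C \<Longrightarrow> g \<in> Ar C \<Longrightarrow> Cod C f = Dom C g \<Longrightarrow> g \<cdot> f \<in> Ar C"
  and dom_comp [simp]: "f \<in> Ar C \<Longrightarrow> g \<in> Ar C \<Longrightarrow> Cod C f = Dom C g \<Longrightarrow> Dom C (g \<cdot> f) = Dom C f"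
  and cod_comp [simp]: "f \<in> Ar C \<Longrightarrow> g \<in> Ar C \<Longrightarrow> Cod C f = Dom C g \<Longrightarrow> Cod C (g \<cdot> f) = Cod C g"
  using category unfolding category_def arr_def by blast+

(* The simplifier keeps composites right-associated; commutative squares are then applied
   inside longer composites with comp_square. *)
lemma comp_assoc [simp]:
  "f \<in> Ar C \<Longrightarrow> g \<in> Ar C \<Longrightarrow> h \<in> Ar C \<Longrightarrow> Cod C f = Dom C g \<Longrightarrow> Cod C g = Dom C h \<Longrightarrow>
    (h \<cdot> g) \<cdot> f = h \<cdot> g \<cdot> f"
  using category unfolding category_def by metis

lemma id_arr [simp]: "X \<in> Ob C \<Longrightarrow> Id C X \<in> Ar C"
  and dom_id [simp]: "X \<in> Ob C \<Longrightarrow> Dom C (Id C X) = X"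
  and cod_id [simp]: "X \<in> Ob C \<Longrightarrow> Cod C (Id C X) = X"
  using category unfolding category_def arr_def by blast+

lemma dom_ob [simp]: "f \<in> Ar C \<Longrightarrow> Dom C f \<in> Ob C"
  and cod_ob [simp]: "f \<in> Ar C \<Longrightarrow> Cod C f \<in> Ob C"
  using category unfolding category_def by blast+

lemma comp_Id [simp]: "f \<in> Ar C \<Longrightarrow> Dom C f = X \<Longrightarrow> f \<cdot> Id C X = f"
  and Id_comp [simp]: "f \<in> Ar C \<Longrightarrow> Cod C f = X \<Longrightarrow> Id C X \<cdot> f = f"
  using category unfolding category_def by blast+

lemma comp_square:
  assumes "g \<cdot> f = k \<cdot> h" "u \<in> Ar C" "f \<in> Ar C" "g \<in> Ar C" "h \<in> Ar C" "k \<in> Ar C"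
    "Cod C u = Dom C f" "Cod C f = Dom C g" "Cod C h = Dom C k" "Dom C h = Dom C f"
  shows "g \<cdot> f \<cdot> u = k \<cdot> h \<cdot> u"
  using assms comp_assoc by metis

lemma mono_cancel:
  assumes "mono C m" "m \<cdot> g = m \<cdot> h" "g \<in> Ar C" "h \<in> Ar C" "Cod C g = Dom C m" "Cod C h = Dom C m"
    "Dom C g = Dom C h"
  shows "g = h"
  using assms unfolding mono_def by blast

lemma pullbackI:
  assumes "a \<in> Ar C" "b \<in> Ar C" "c \<in> Ar C" "d \<in> Ar C"
    "Cod C a = Dom C c" "Cod C b = Dom C d" "Dom C b = Dom C a" "Cod C d = Cod C c" "c \<cdot> a = d \<cdot> b"
    and factor: "\<And>p q. p \<in> Ar C \<Longrightarrow> q \<in> Ar C \<Longrightarrow> Cod C p = Dom C c \<Longrightarrow> Cod C q = Dom C d \<Longrightarrow>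
      Dom C q = Dom C p \<Longrightarrow> c \<cdot> p = d \<cdot> q \<Longrightarrow>
      \<exists>u. u \<in> Ar C \<and> Dom C u = Dom C p \<and> Cod C u = Dom C a \<and> a \<cdot> u = p \<and> b \<cdot> u = q"
    and unique: "\<And>u u'. u \<in> Ar C \<Longrightarrow> u' \<in> Ar C \<Longrightarrow> Cod C u = Dom C a \<Longrightarrow> Cod C u' = Dom C a \<Longrightarrow>
      Dom C u' = Dom C u \<Longrightarrow> a \<cdot> u = a \<cdot> u' \<Longrightarrow> b \<cdot> u = b \<cdot> u' \<Longrightarrow> u = u'"
  shows "pullback C c d a b"
  unfolding pullback_def
proof (intro conjI allI impI)
  fix p q
  assume "p \<in> Ar C \<and> q \<in> Ar C \<and> Cod C p = Dom C c \<and> Cod C q = Dom C d \<and> Dom C p = Dom C q \<and>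
    c \<cdot> p = d \<cdot> q"
  then show "\<exists>!u. arr C u (Dom C p) (Dom C a) \<and> a \<cdot> u = p \<and> b \<cdot> u = q"
    using factor[of p q] unique unfolding arr_def by (metis (no_types, lifting))
qed (use assms in simp_all)

lemma pullback_square:
  assumes "pullback C c d a b"
  shows "a \<in> Ar C" "b \<in> Ar C" "c \<in> Ar C" "d \<in> Ar C" "Cod C a = Dom C c" "Cod C b = Dom C d"
    "Dom C b = Dom C a" "Cod C d = Cod C c" "c \<cdot> a = d \<cdot> b"
  using assms unfolding pullback_def by auto

lemma pullback_universal:
  assumes "pullback C c d a b" "p \<in> Ar C" "q \<in> Ar C" "Cod C p = Dom C c" "Cod C q = Dom C d"
    "Dom C q = Dom C p" "c \<cdot> p = d \<cdot> q"
  shows "\<exists>!u. arr C u (Dom C p) (Dom C a) \<and> a \<cdot> u = p \<and> b \<cdot> u = q"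
proof -
  have "\<forall>p q. p \<in> Ar C \<and> q \<in> Ar C \<and> Cod C p = Dom C c \<and> Cod C q = Dom C d \<and>
      Dom C p = Dom C q \<and> c \<cdot> p = d \<cdot> q \<longrightarrow>
      (\<exists>!u. arr C u (Dom C p) (Dom C a) \<and> a \<cdot> u = p \<and> b \<cdot> u = q)"
    using assms(1) unfolding pullback_def by blast
  from this[rule_format, of p q] show ?thesis
    using assms(2-) by simp
qed

lemma pullback_factor:
  assumes "pullback C c d a b" "p \<in> Ar C" "q \<in> Ar C" "Cod C p = Dom C c" "Cod C q = Dom C d"
    "Dom C q = Dom C p" "c \<cdot> p = d \<cdot> q"
  obtains u where "u \<in> Ar C" "Dom C u = Dom C p" "Cod C u = Dom C a" "a \<cdot> u = p" "b \<cdot> u = q"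
  using pullback_universal[OF assms] unfolding arr_def by metis

lemma pullback_jointly_mono:
  assumes pb: "pullback C c d a b" and "u \<in> Ar C" "u' \<in> Ar C" "Cod C u = Dom C a" "Cod C u' = Dom C a"
    "Dom C u' = Dom C u" "a \<cdot> u = a \<cdot> u'" "b \<cdot> u = b \<cdot> u'"
  shows "u = u'"
proof -
  note sq = pullback_square[OF pb]
  have comm: "c \<cdot> a \<cdot> u = d \<cdot> b \<cdot> u"
    by (rule comp_square) (use sq assms(2,4) in simp_all)
  have "\<exists>!v. arr C v (Dom C (a \<cdot> u)) (Dom C a) \<and> a \<cdot> v = a \<cdot> u \<and> b \<cdot> v = b \<cdot> u"
    by (rule pullback_universal[OF pb]) (use sq assms(2,4) comm in simp_all)
  moreover have "arr C u (Dom C (a \<cdot> u)) (Dom C a)" "arr C u' (Dom C (a \<cdot> u)) (Dom C a)"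
    using sq assms unfolding arr_def by simp_all
  ultimately show ?thesis
    using assms(7,8) by (elim ex1E) metis
qed

lemma pushoutI:
  assumes "f \<in> Ar C" "g \<in> Ar C" "h \<in> Ar C" "k \<in> Ar C"
    "Dom C g = Dom C f" "Dom C h = Cod C f" "Dom C k = Cod C g" "Cod C k = Cod C h" "h \<cdot> f = k \<cdot> g"
    and factor: "\<And>p q. p \<in> Ar C \<Longrightarrow> q \<in> Ar C \<Longrightarrow> Dom C p = Cod C f \<Longrightarrow> Dom C q = Cod C g \<Longrightarrow>
      Cod C q = Cod C p \<Longrightarrow> p \<cdot> f = q \<cdot> g \<Longrightarrow>
      \<exists>u. u \<in> Ar C \<and> Dom C u = Cod C h \<and> Cod C u = Cod C p \<and> u \<cdot> h = p \<and> u \<cdot> k = q"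
    and unique: "\<And>u u'. u \<in> Ar C \<Longrightarrow> u' \<in> Ar C \<Longrightarrow> Dom C u = Cod C h \<Longrightarrow> Dom C u' = Cod C h \<Longrightarrow>
      Cod C u' = Cod C u \<Longrightarrow> u \<cdot> h = u' \<cdot> h \<Longrightarrow> u \<cdot> k = u' \<cdot> k \<Longrightarrow> u = u'"
  shows "pushout C f g h k"
  unfolding pushout_def
proof (intro conjI allI impI)
  fix p q
  assume "p \<in> Ar C \<and> q \<in> Ar C \<and> Dom C p = Cod C f \<and> Dom C q = Cod C g \<and> Cod C p = Cod C q \<and>
    p \<cdot> f = q \<cdot> g"
  then show "\<exists>!u. arr C u (Cod C h) (Cod C p) \<and> u \<cdot> h = p \<and> u \<cdot> k = q"
    using factor[of p q] unique unfolding arr_def by (metis (no_types, lifting))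
qed (use assms in simp_all)

lemma pushout_square:
  assumes "pushout C f g h k"
  shows "f \<in> Ar C" "g \<in> Ar C" "h \<in> Ar C" "k \<in> Ar C" "Dom C g = Dom C f" "Dom C h = Cod C f"
    "Dom C k = Cod C g" "Cod C k = Cod C h" "h \<cdot> f = k \<cdot> g"
  using assms unfolding pushout_def by auto

lemma pushout_universal:
  assumes "pushout C f g h k" "p \<in> Ar C" "q \<in> Ar C" "Dom C p = Cod C f" "Dom C q = Cod C g"
    "Cod C q = Cod C p" "p \<cdot> f = q \<cdot> g"
  shows "\<exists>!u. arr C u (Cod C h) (Cod C p) \<and> u \<cdot> h = p \<and> u \<cdot> k = q"
proof -
  have "\<forall>p q. p \<in> Ar C \<and> q \<in> Ar C \<and> Dom C p = Cod C f \<and> Dom C q = Cod C g \<and>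
      Cod C p = Cod C q \<and> p \<cdot> f = q \<cdot> g \<longrightarrow>
      (\<exists>!u. arr C u (Cod C h) (Cod C p) \<and> u \<cdot> h = p \<and> u \<cdot> k = q)"
    using assms(1) unfolding pushout_def by blast
  from this[rule_format, of p q] show ?thesis
    using assms(2-) by simp
qed

lemma pushout_factor:
  assumes "pushout C f g h k" "p \<in> Ar C" "q \<in> Ar C" "Dom C p = Cod C f" "Dom C q = Cod C g"
    "Cod C q = Cod C p" "p \<cdot> f = q \<cdot> g"
  obtains u where "u \<in> Ar C" "Dom C u = Cod C h" "Cod C u = Cod C p" "u \<cdot> h = p" "u \<cdot> k = q"
  using pushout_universal[OF assms] unfolding arr_def by metis

lemma pushout_jointly_epi:
  assumes po: "pushout C f g h k" and "u \<in> Ar C" "u' \<in> Ar C" "Dom C u = Cod C h" "Dom C u' = Cod C h"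
    "Cod C u' = Cod C u" "u \<cdot> h = u' \<cdot> h" "u \<cdot> k = u' \<cdot> k"
  shows "u = u'"
proof -
  note sq = pushout_square[OF po]
  have comm: "(u \<cdot> h) \<cdot> f = (u \<cdot> k) \<cdot> g"
    using sq assms(2,4) by simp
  have "\<exists>!v. arr C v (Cod C h) (Cod C (u \<cdot> h)) \<and> v \<cdot> h = u \<cdot> h \<and> v \<cdot> k = u \<cdot> k"
    by (rule pushout_universal[OF po]) (use sq assms(2,4) comm in simp_all)
  moreover have "arr C u (Cod C h) (Cod C (u \<cdot> h))" "arr C u' (Cod C h) (Cod C (u \<cdot> h))"
    using sq assms unfolding arr_def by simp_all
  ultimately show ?thesis
    using assms(7,8) by (elim ex1E) metis
qed

lemma pullback_sym: "pullback C c d a b \<Longrightarrow> pullback C d c b a"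
  unfolding pullback_def by (metis (no_types, lifting))

lemma mono_kernel_pair:
  assumes "mono C f"
  shows "pullback C f f (Id C (Dom C f)) (Id C (Dom C f))"
proof (rule pullbackI)
  fix p q
  assume "p \<in> Ar C" "q \<in> Ar C" "Cod C p = Dom C f" "Cod C q = Dom C f" "Dom C q = Dom C p" "f \<cdot> p = f \<cdot> q"
  moreover from this have "p = q"
    using mono_cancel[OF assms] by simp
  ultimately show "\<exists>u. u \<in> Ar C \<and> Dom C u = Dom C p \<and> Cod C u = Dom C (Id C (Dom C f)) \<and>
      Id C (Dom C f) \<cdot> u = p \<and> Id C (Dom C f) \<cdot> u = q"
    using assms unfolding mono_def by (intro exI[of _ p]) simp
qed (use assms in \<open>auto simp: mono_def\<close>)

lemma pullback_along_Id:
  assumes "g \<in> Ar C"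
  shows "pullback C g (Id C (Cod C g)) (Id C (Dom C g)) g"
proof (rule pullbackI)
  fix p q
  assume "p \<in> Ar C" "q \<in> Ar C" "Cod C p = Dom C g" "Cod C q = Dom C (Id C (Cod C g))"
    "Dom C q = Dom C p" "g \<cdot> p = Id C (Cod C g) \<cdot> q"
  then show "\<exists>u. u \<in> Ar C \<and> Dom C u = Dom C p \<and> Cod C u = Dom C (Id C (Dom C g)) \<and>
      Id C (Dom C g) \<cdot> u = p \<and> g \<cdot> u = q"
    using assms by (intro exI[of _ p]) simp
qed (use assms in simp_all)

lemma pushout_along_Id:
  assumes "g \<in> Ar C"
  shows "pushout C (Id C (Dom C g)) g g (Id C (Cod C g))"
proof (rule pushoutI)
  fix p q
  assume "p \<in> Ar C" "q \<in> Ar C" "Dom C p = Cod C (Id C (Dom C g))" "Dom C q = Cod C g"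
    "Cod C q = Cod C p" "p \<cdot> Id C (Dom C g) = q \<cdot> g"
  then show "\<exists>u. u \<in> Ar C \<and> Dom C u = Cod C g \<and> Cod C u = Cod C p \<and> u \<cdot> g = p \<and>
      u \<cdot> Id C (Cod C g) = q"
    using assms by (intro exI[of _ q]) simp
qed (use assms in simp_all)

lemma pullback_paste:
  assumes pb1: "pullback C c d a b" and pb2: "pullback C a k e m"
  shows "pullback C (c \<cdot> k) d m (b \<cdot> e)"
proof (rule pullbackI)
  note sq1 = pullback_square[OF pb1] and sq2 = pullback_square[OF pb2]
  have "c \<cdot> k \<cdot> m = c \<cdot> a \<cdot> e"
    using sq1 sq2 by simp
  also have "\<dots> = d \<cdot> b \<cdot> e"
    by (rule comp_square) (use sq1 sq2 in simp_all)
  finally show "(c \<cdot> k) \<cdot> m = d \<cdot> b \<cdot> e"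
    using sq1 sq2 by simp
next
  note sq1 = pullback_square[OF pb1] and sq2 = pullback_square[OF pb2]
  fix p q
  assume p: "p \<in> Ar C" "Cod C p = Dom C (c \<cdot> k)" and q: "q \<in> Ar C" "Cod C q = Dom C d"
    and pq: "Dom C q = Dom C p" "(c \<cdot> k) \<cdot> p = d \<cdot> q"
  obtain u1 where u1: "u1 \<in> Ar C" "Dom C u1 = Dom C p" "Cod C u1 = Dom C a"
      "a \<cdot> u1 = k \<cdot> p" "b \<cdot> u1 = q"
    by (rule pullback_factor[OF pb1, of "k \<cdot> p" q]) (use sq1 sq2 p q pq in simp_all)
  obtain u where "u \<in> Ar C" "Dom C u = Dom C p" "Cod C u = Dom C e" "e \<cdot> u = u1" "m \<cdot> u = p"
    by (rule pullback_factor[OF pb2, of u1 p]) (use sq1 sq2 p u1 in simp_all)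
  with u1 sq1 sq2 show "\<exists>u. u \<in> Ar C \<and> Dom C u = Dom C p \<and> Cod C u = Dom C m \<and> m \<cdot> u = p \<and>
      (b \<cdot> e) \<cdot> u = q"
    by (intro exI[of _ u]) simp
next
  note sq1 = pullback_square[OF pb1] and sq2 = pullback_square[OF pb2]
  fix u u'
  assume u: "u \<in> Ar C" "u' \<in> Ar C" "Cod C u = Dom C m" "Cod C u' = Dom C m" "Dom C u' = Dom C u"
    and eq: "m \<cdot> u = m \<cdot> u'" "(b \<cdot> e) \<cdot> u = (b \<cdot> e) \<cdot> u'"
  have "a \<cdot> e \<cdot> u = a \<cdot> e \<cdot> u'"
    using comp_square[OF sq2(9), of u] comp_square[OF sq2(9), of u'] eq u sq2 by simp
  then have "e \<cdot> u = e \<cdot> u'"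
    using pullback_jointly_mono[OF pb1] eq u sq1 sq2 by simp
  then show "u = u'"
    using pullback_jointly_mono[OF pb2] eq u sq2 by simp
qed (use pullback_square[OF pb1] pullback_square[OF pb2] in simp_all)

lemma pullback_cancel:
  assumes pb: "pullback C c d a b" and outer: "pullback C (c \<cdot> k) d e (b \<cdot> m)"
    and k: "k \<in> Ar C" "Cod C k = Dom C c" and m: "m \<in> Ar C" "Cod C m = Dom C b"
    and comm: "k \<cdot> e = a \<cdot> m"
  shows "pullback C k a e m"
proof (rule pullbackI)
  note sq = pullback_square[OF pb] and sq' = pullback_square[OF outer]
  fix p q
  assume p: "p \<in> Ar C" "Cod C p = Dom C k" and q: "q \<in> Ar C" "Cod C q = Dom C a"
    and pq: "Dom C q = Dom C p" "k \<cdot> p = a \<cdot> q"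
  have "(c \<cdot> k) \<cdot> p = c \<cdot> a \<cdot> q"
    using sq p k pq by simp
  also have "\<dots> = d \<cdot> b \<cdot> q"
    by (rule comp_square) (use sq q in simp_all)
  finally have outer_comm: "(c \<cdot> k) \<cdot> p = d \<cdot> b \<cdot> q" .
  obtain u where u: "u \<in> Ar C" "Dom C u = Dom C p" "Cod C u = Dom C e" "e \<cdot> u = p"
      "(b \<cdot> m) \<cdot> u = b \<cdot> q"
    by (rule pullback_factor[OF outer, of p "b \<cdot> q"]) (use sq sq' p q pq k outer_comm in simp_all)
  have "a \<cdot> m \<cdot> u = k \<cdot> e \<cdot> u"
    by (rule comp_square[OF comm[symmetric]]) (use u sq sq' k m in simp_all)
  then have "a \<cdot> m \<cdot> u = a \<cdot> q"
    using u pq by simp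
  then have "m \<cdot> u = q"
    using pullback_jointly_mono[OF pb, of "m \<cdot> u" q] u sq sq' k m p q pq by simp
  with u show "\<exists>u. u \<in> Ar C \<and> Dom C u = Dom C p \<and> Cod C u = Dom C e \<and> e \<cdot> u = p \<and> m \<cdot> u = q"
    by blast
next
  note sq = pullback_square[OF pb] and sq' = pullback_square[OF outer]
  fix u u'
  assume "u \<in> Ar C" "u' \<in> Ar C" "Cod C u = Dom C e" "Cod C u' = Dom C e" "Dom C u' = Dom C u"
    "e \<cdot> u = e \<cdot> u'" "m \<cdot> u = m \<cdot> u'"
  then show "u = u'"
    using pullback_jointly_mono[OF outer, of u u'] sq sq' m by simp
qed (use pullback_square[OF pb] pullback_square[OF outer] k m comm in simp_all)

lemma van_kampen_cube:
  assumes "van_kampen C f g h k"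
    "arr C a (Dom C f') (Dom C f)" "arr C b (Cod C f') (Cod C f)"
    "arr C c (Cod C g') (Cod C g)" "arr C d (Cod C h') (Cod C h)"
    "f' \<in> Ar C" "g' \<in> Ar C" "h' \<in> Ar C" "k' \<in> Ar C"
    "Dom C g' = Dom C f'" "Dom C h' = Cod C f'" "Dom C k' = Cod C g'" "Cod C k' = Cod C h'"
    "h' \<cdot> f' = k' \<cdot> g'" "f \<cdot> a = b \<cdot> f'" "g \<cdot> a = c \<cdot> g'" "h \<cdot> b = d \<cdot> h'" "k \<cdot> c = d \<cdot> k'"
    "pullback C f b a f'" "pullback C g c a g'"
  shows "pushout C f' g' h' k' \<longleftrightarrow> pullback C h d b h' \<and> pullback C k d c k'"
proof -
  have "\<forall>f' g' h' k' a b c d.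
        arr C a (Dom C f') (Dom C f) \<and> arr C b (Cod C f') (Cod C f) \<and>
        arr C c (Cod C g') (Cod C g) \<and> arr C d (Cod C h') (Cod C h) \<and>
        f' \<in> Ar C \<and> g' \<in> Ar C \<and> h' \<in> Ar C \<and> k' \<in> Ar C \<and>
        Dom C g' = Dom C f' \<and> Dom C h' = Cod C f' \<and> Dom C k' = Cod C g' \<and>
        Cod C k' = Cod C h' \<and>
        h' \<cdot> f' = k' \<cdot> g' \<and>
        f \<cdot> a = b \<cdot> f' \<and> g \<cdot> a = c \<cdot> g' \<and>
        h \<cdot> b = d \<cdot> h' \<and> k \<cdot> c = d \<cdot> k' \<and>
        pullback C f b a f' \<and> pullback C g c a g' \<longrightarrow>
        (pushout C f' g' h' k' \<longleftrightarrow> pullback C h d b h' \<and> pullback C k d c k')"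
    using assms(1) unfolding van_kampen_def by blast
  from this[rule_format, of a f' b c g' d h' k'] show ?thesis
    using assms(2-) by blast
qed

lemma fpc_of_mono:
  assumes pb: "pullback C c d a b" and d: "mono C d"
    and factor: "\<And>x0 y0 z0 w0. arr C x0 (Dom C x0) (Cod C a) \<Longrightarrow> arr C y0 (Dom C x0) (Cod C y0) \<Longrightarrow>
      arr C z0 (Cod C y0) (Cod C c) \<Longrightarrow> arr C w0 (Dom C x0) (Dom C a) \<Longrightarrow>
      pullback C c z0 x0 y0 \<Longrightarrow> a \<cdot> w0 = x0 \<Longrightarrow>
      \<exists>u. u \<in> Ar C \<and> Dom C u = Cod C y0 \<and> Cod C u = Dom C d \<and> d \<cdot> u = z0"
  shows "fpc C c a d b"
  unfolding fpc_def
proof (intro conjI allI impI)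
  note sq = pullback_square[OF pb]
  fix x0 y0 z0 w0
  assume "arr C x0 (Dom C x0) (Cod C a) \<and> arr C y0 (Dom C x0) (Cod C y0) \<and>
    arr C z0 (Cod C y0) (Cod C c) \<and> arr C w0 (Dom C x0) (Dom C a) \<and>
    pullback C c z0 x0 y0 \<and> a \<cdot> w0 = x0"
  then have test: "arr C x0 (Dom C x0) (Cod C a)" "arr C y0 (Dom C x0) (Cod C y0)"
    "arr C z0 (Cod C y0) (Cod C c)" "arr C w0 (Dom C x0) (Dom C a)"
    and pb0: "pullback C c z0 x0 y0" and aw: "a \<cdot> w0 = x0"
    by simp_all
  obtain u where u: "u \<in> Ar C" "Dom C u = Cod C y0" "Cod C u = Dom C d" "d \<cdot> u = z0"
    using factor[OF test pb0 aw] by blast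
  note sq0 = pullback_square[OF pb0]
  have "d \<cdot> u \<cdot> y0 = (d \<cdot> u) \<cdot> y0"
    using test u(1-3) sq sq0 by (simp add: arr_def)
  also have "\<dots> = c \<cdot> a \<cdot> w0"
    using u sq0 aw by simp
  also have "\<dots> = d \<cdot> b \<cdot> w0"
    by (rule comp_square) (use test sq in \<open>simp_all add: arr_def\<close>)
  finally have "u \<cdot> y0 = b \<cdot> w0"
    by (rule mono_cancel[OF d]) (use test u sq sq0 in \<open>simp_all add: arr_def\<close>)
  with u have "arr C u (Cod C y0) (Dom C d) \<and> d \<cdot> u = z0 \<and> u \<cdot> y0 = b \<cdot> w0"
    by (simp add: arr_def)
  moreover have "v = u" if "arr C v (Cod C y0) (Dom C d) \<and> d \<cdot> v = z0 \<and> v \<cdot> y0 = b \<cdot> w0" for v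
    by (rule mono_cancel[OF d]) (use that u in \<open>simp_all add: arr_def\<close>)
  ultimately show "\<exists>!u. arr C u (Cod C y0) (Dom C d) \<and> d \<cdot> u = z0 \<and> u \<cdot> y0 = b \<cdot> w0"
    by (rule ex1I)
qed (use pb pullback_square[OF pb] in simp_all)

lemma fpc_factor:
  assumes "fpc C c a d b"
    "arr C x0 (Dom C x0) (Cod C a)" "arr C y0 (Dom C x0) (Cod C y0)"
    "arr C z0 (Cod C y0) (Cod C c)" "arr C w0 (Dom C x0) (Dom C a)"
    "pullback C c z0 x0 y0" "a \<cdot> w0 = x0"
  obtains u where "u \<in> Ar C" "Dom C u = Cod C y0" "Cod C u = Dom C d" "d \<cdot> u = z0" "u \<cdot> y0 = b \<cdot> w0"
proof -
  have "\<exists>!u. arr C u (Cod C y0) (Dom C d) \<and> d \<cdot> u = z0 \<and> u \<cdot> y0 = b \<cdot> w0"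
    using assms unfolding fpc_def by blast
  then show ?thesis
    using that unfolding arr_def by blast
qed

end

locale adhesive_cat = cat +
  assumes adhesive: "adhesive C"
begin

lemma pullback_exists:
  assumes "c \<in> Ar C" "d \<in> Ar C" "Cod C c = Cod C d"
  obtains a b where "pullback C c d a b"
  using adhesive assms unfolding adhesive_def has_pullbacks_def by blast

lemma van_kampen_along_mono: "pushout C f g h k \<Longrightarrow> mono C f \<Longrightarrow> van_kampen C f g h k"
  using adhesive unfolding adhesive_def by blast

lemma pushout_along_mono_is_pullback:
  assumes po: "pushout C f g h k" and f: "mono C f"
  shows "pullback C h k f g"
proof -
  note sq = pushout_square[OF po]
  have "pushout C (Id C (Dom C f)) g g (Id C (Cod C g)) \<longleftrightarrow>
      pullback C h k f g \<and> pullback C k k (Id C (Cod C g)) (Id C (Cod C g))"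
    by (rule van_kampen_cube[OF van_kampen_along_mono[OF po f]])
      (use sq mono_kernel_pair[OF f] pullback_along_Id[of g] in \<open>simp_all add: arr_def\<close>)
  then show ?thesis
    using pushout_along_Id[of g] sq by simp
qed

lemma pullback_of_pushout_along_mono:
  assumes po: "pushout C f g h k" and f: "mono C f" and s: "s \<in> Ar C" "Cod C s = Cod C h"
  obtains f' g' t1 t2 a1 a2 where "pushout C f' g' t1 t2" "Cod C t1 = Dom C s"
    "a1 \<in> Ar C" "Dom C a1 = Dom C t1" "Cod C a1 = Cod C f"
    "a2 \<in> Ar C" "Dom C a2 = Dom C t2" "Cod C a2 = Cod C g"
    "s \<cdot> t1 = h \<cdot> a1" "s \<cdot> t2 = k \<cdot> a2"
proof -
  note sq = pushout_square[OF po]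
  obtain a1 t1 where pb1: "pullback C h s a1 t1"
    using pullback_exists[of h s] sq s by metis
  obtain a2 t2 where pb2: "pullback C k s a2 t2"
    using pullback_exists[of k s] sq s by metis
  note sq1 = pullback_square[OF pb1] and sq2 = pullback_square[OF pb2]
  obtain a f' where pb0: "pullback C f a1 a f'"
    using pullback_exists[of f a1] sq sq1 by metis
  note sq0 = pullback_square[OF pb0]
  have "k \<cdot> g \<cdot> a = h \<cdot> f \<cdot> a"
    by (rule comp_square[OF sq(9)[symmetric]]) (use sq sq0 in simp_all)
  also have "\<dots> = h \<cdot> a1 \<cdot> f'"
    using sq0 by simp
  also have "\<dots> = s \<cdot> t1 \<cdot> f'"
    by (rule comp_square) (use sq0 sq1 in simp_all)
  finally have comm: "k \<cdot> g \<cdot> a = s \<cdot> t1 \<cdot> f'" .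
  obtain g' where g': "g' \<in> Ar C" "Dom C g' = Dom C a" "Cod C g' = Dom C a2"
      "a2 \<cdot> g' = g \<cdot> a" "t2 \<cdot> g' = t1 \<cdot> f'"
    by (rule pullback_factor[OF pb2, of "g \<cdot> a" "t1 \<cdot> f'"]) (use sq sq0 sq1 sq2 comm in simp_all)
  have "pullback C (h \<cdot> f) s a (t1 \<cdot> f')"
    by (rule pullback_paste[OF pb1 pullback_sym[OF pb0]])
  then have "pullback C (k \<cdot> g) s a (t2 \<cdot> g')"
    using sq(9) g'(5) by simp
  then have pb_back: "pullback C g a2 a g'"
    by (rule pullback_cancel[OF pb2]) (use sq sq2 g' in simp_all)
  have "pushout C f' g' t1 t2 \<longleftrightarrow> pullback C h s a1 t1 \<and> pullback C k s a2 t2"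
    by (rule van_kampen_cube[OF van_kampen_along_mono[OF po f] _ _ _ _ _ _ _ _ _ _ _ _ _ _ _ _ _ pb0 pb_back])
      (use sq sq0 sq1 sq2 g' s in \<open>simp_all add: arr_def\<close>)
  with pb1 pb2 have "pushout C f' g' t1 t2"
    by blast
  then show ?thesis
    by (rule that[of f' g' t1 t2 a1 a2]) (use sq sq1 sq2 in simp_all)
qed

end

locale stacked_squares = adhesive_cat C for C :: "('o, 'a) cat" +
  fixes Z' Z Y Y' X X' :: 'o and z w w' y v v' x :: 'a
  assumes z: "arr C z Z' Z" and w: "arr C w Z Y" and w': "arr C w' Z' Y'" and y: "arr C y Y' Y"
    and v: "arr C v Y X" and v': "arr C v' Y' X'" and x: "arr C x X' X"
    and square3: "w \<cdot> z = y \<cdot> w'" and square4: "v \<cdot> y = x \<cdot> v'"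
    and mono_z: "mono C z" and mono_y: "mono C y" and mono_v': "mono C v'" and mono_x: "mono C x"
    and mono_vw: "mono C (v \<cdot> w)"
    and square3_pushout: "pushout C z w' w y"
    and composite_fpc: "fpc C (v \<cdot> w) z x (v' \<cdot> w')"
begin

lemma arrows [simp]:
  "z \<in> Ar C" "w \<in> Ar C" "w' \<in> Ar C" "y \<in> Ar C" "v \<in> Ar C" "v' \<in> Ar C" "x \<in> Ar C"
  "Dom C z = Z'" "Cod C z = Z" "Dom C w = Z" "Cod C w = Y" "Dom C w' = Z'" "Cod C w' = Y'"
  "Dom C y = Y'" "Cod C y = Y" "Dom C v = Y" "Cod C v = X" "Dom C v' = Y'" "Cod C v' = X'"
  "Dom C x = X'" "Cod C x = X"
  using z w w' y v v' x unfolding arr_def by auto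

lemma square3_pullback: "pullback C w y z w'"
  by (rule pushout_along_mono_is_pullback[OF square3_pushout mono_z])

lemma composite_pullback: "pullback C (v \<cdot> w) x z (v' \<cdot> w')"
  using composite_fpc unfolding fpc_def by blast

lemma square4_pullback: "pullback C v x y v'"
proof (rule pullbackI)
  fix p q
  assume p: "p \<in> Ar C" "Cod C p = Dom C v" and q: "q \<in> Ar C" "Cod C q = Dom C x"
    and pq: "Dom C q = Dom C p" "v \<cdot> p = x \<cdot> q"
  obtain f' g' t1 t2 a1 a2 where po: "pushout C f' g' t1 t2" and t1: "Cod C t1 = Dom C p"
    and a1: "a1 \<in> Ar C" "Dom C a1 = Dom C t1" "Cod C a1 = Z"
    and a2: "a2 \<in> Ar C" "Dom C a2 = Dom C t2" "Cod C a2 = Y'"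
    and p_t1: "p \<cdot> t1 = w \<cdot> a1" and p_t2: "p \<cdot> t2 = y \<cdot> a2"
    by (rule pullback_of_pushout_along_mono[OF square3_pushout mono_z p(1)]) (use p in simp_all)
  note sq = pushout_square[OF po]
  note arrs = p q pq t1 a1 a2 sq
  have "(v \<cdot> w) \<cdot> a1 = v \<cdot> p \<cdot> t1"
    using arrs p_t1 by simp
  also have "\<dots> = x \<cdot> q \<cdot> t1"
    by (rule comp_square[OF pq(2)]) (use arrs in simp_all)
  finally have vw_a1: "(v \<cdot> w) \<cdot> a1 = x \<cdot> q \<cdot> t1" .
  obtain c1 where c1: "c1 \<in> Ar C" "Dom C c1 = Dom C a1" "Cod C c1 = Z'" "z \<cdot> c1 = a1"
      "(v' \<cdot> w') \<cdot> c1 = q \<cdot> t1"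
    by (rule pullback_factor[OF composite_pullback, of a1 "q \<cdot> t1"]) (use arrs vw_a1 in simp_all)
  have "x \<cdot> v' \<cdot> a2 = v \<cdot> y \<cdot> a2"
    by (rule comp_square[OF square4[symmetric]]) (use arrs in simp_all)
  also have "\<dots> = x \<cdot> q \<cdot> t2"
    using comp_square[OF pq(2), of t2] p_t2 arrs by simp
  finally have v'_a2: "v' \<cdot> a2 = q \<cdot> t2"
    by (rule mono_cancel[OF mono_x]) (use arrs in simp_all)
  have y_w'_c1: "y \<cdot> w' \<cdot> c1 = p \<cdot> t1"
    using comp_square[OF square3[symmetric], of c1] arrs c1 p_t1 by simp
  have "y \<cdot> w' \<cdot> c1 \<cdot> f' = y \<cdot> a2 \<cdot> g'"
    using comp_square[OF y_w'_c1, of f'] comp_square[OF p_t2, of g'] arrs c1 by simp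
  then have glue: "w' \<cdot> c1 \<cdot> f' = a2 \<cdot> g'"
    by (rule mono_cancel[OF mono_y]) (use arrs c1 in simp_all)
  obtain u where u: "u \<in> Ar C" "Dom C u = Cod C t1" "Cod C u = Y'" "u \<cdot> t1 = w' \<cdot> c1" "u \<cdot> t2 = a2"
    by (rule pushout_factor[OF po, of "w' \<cdot> c1" a2]) (use arrs c1 glue in simp_all)
  have "y \<cdot> u = p"
    by (rule pushout_jointly_epi[OF po]) (use arrs c1 u y_w'_c1 p_t2 in simp_all)
  moreover have "v' \<cdot> u = q"
    by (rule pushout_jointly_epi[OF po]) (use arrs c1 u v'_a2 in simp_all)
  ultimately show "\<exists>u. u \<in> Ar C \<and> Dom C u = Dom C p \<and> Cod C u = Dom C y \<and> y \<cdot> u = p \<and> v' \<cdot> u = q"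
    using u arrs by auto
next
  fix u u'
  assume "u \<in> Ar C" "u' \<in> Ar C" "Cod C u = Dom C y" "Cod C u' = Dom C y" "Dom C u' = Dom C u"
    "y \<cdot> u = y \<cdot> u'" "v' \<cdot> u = v' \<cdot> u'"
  then show "u = u'"
    using mono_cancel[OF mono_y] by simp
qed (simp_all add: square4)

lemma v_cancel_y:
  assumes s: "s \<in> Ar C" "Cod C s = Y" and b: "b \<in> Ar C" "Cod C b = Y'" "Dom C b = Dom C s"
    and eq: "v \<cdot> s = v \<cdot> y \<cdot> b"
  shows "s = y \<cdot> b"
proof -
  have comm: "v \<cdot> s = x \<cdot> v' \<cdot> b"
    using eq comp_square[OF square4, of b] b by simp
  obtain u where u: "u \<in> Ar C" "Dom C u = Dom C s" "Cod C u = Y'" "y \<cdot> u = s" "v' \<cdot> u = v' \<cdot> b"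
    by (rule pullback_factor[OF square4_pullback, of s "v' \<cdot> b"]) (use s b comm in simp_all)
  then have "u = b"
    using mono_cancel[OF mono_v', of u b] b by simp
  with u show ?thesis
    by simp
qed

lemma v_cancel_w:
  assumes s: "s \<in> Ar C" "Cod C s = Y" and b: "b \<in> Ar C" "Cod C b = Z" "Dom C b = Dom C s"
    and eq: "v \<cdot> s = v \<cdot> w \<cdot> b"
  shows "s = w \<cdot> b"
proof -
  obtain f' g' t1 t2 a1 a2 where po: "pushout C f' g' t1 t2" and t1: "Cod C t1 = Dom C s"
    and a1: "a1 \<in> Ar C" "Dom C a1 = Dom C t1" "Cod C a1 = Z"
    and a2: "a2 \<in> Ar C" "Dom C a2 = Dom C t2" "Cod C a2 = Y'"
    and s_t1: "s \<cdot> t1 = w \<cdot> a1" and s_t2: "s \<cdot> t2 = y \<cdot> a2"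
    by (rule pullback_of_pushout_along_mono[OF square3_pushout mono_z s(1)]) (use s in simp_all)
  note arrs = s b t1 a1 a2 pushout_square[OF po]
  have "(v \<cdot> w) \<cdot> a1 = v \<cdot> s \<cdot> t1"
    using arrs s_t1 by simp
  also have "\<dots> = (v \<cdot> w) \<cdot> b \<cdot> t1"
    using comp_square[OF eq, of t1] arrs by simp
  finally have "a1 = b \<cdot> t1"
    by (rule mono_cancel[OF mono_vw]) (use arrs in simp_all)
  with s_t1 have on_t1: "s \<cdot> t1 = (w \<cdot> b) \<cdot> t1"
    using arrs by simp
  have "v \<cdot> w \<cdot> b \<cdot> t2 = v \<cdot> y \<cdot> a2"
    using comp_square[OF eq, of t2] s_t2 arrs by simp
  then have "w \<cdot> b \<cdot> t2 = y \<cdot> a2"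
    by (rule v_cancel_y[rotated -1]) (use arrs in simp_all)
  with s_t2 have on_t2: "s \<cdot> t2 = (w \<cdot> b) \<cdot> t2"
    using arrs by simp
  show ?thesis
    by (rule pushout_jointly_epi[OF po]) (use arrs on_t1 on_t2 in simp_all)
qed

lemma mono_v: "mono C v"
  unfolding mono_def
proof (intro conjI allI impI)
  fix g h
  assume "g \<in> Ar C \<and> h \<in> Ar C \<and> Cod C g = Dom C v \<and> Cod C h = Dom C v \<and> Dom C g = Dom C h \<and>
    v \<cdot> g = v \<cdot> h"
  then have g: "g \<in> Ar C" "Cod C g = Y" and h: "h \<in> Ar C" "Cod C h = Y" "Dom C h = Dom C g"
    and eq: "v \<cdot> g = v \<cdot> h"
    by simp_all
  obtain f' g' t1 t2 a1 a2 where po: "pushout C f' g' t1 t2" and t1: "Cod C t1 = Dom C g"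
    and a1: "a1 \<in> Ar C" "Dom C a1 = Dom C t1" "Cod C a1 = Z"
    and a2: "a2 \<in> Ar C" "Dom C a2 = Dom C t2" "Cod C a2 = Y'"
    and g_t1: "g \<cdot> t1 = w \<cdot> a1" and g_t2: "g \<cdot> t2 = y \<cdot> a2"
    by (rule pullback_of_pushout_along_mono[OF square3_pushout mono_z g(1)]) (use g in simp_all)
  note arrs = g h t1 a1 a2 pushout_square[OF po]
  have "v \<cdot> h \<cdot> t1 = (v \<cdot> h) \<cdot> t1"
    using arrs by simp
  also have "\<dots> = v \<cdot> w \<cdot> a1"
    using eq[symmetric] g_t1 arrs by simp
  finally have "v \<cdot> h \<cdot> t1 = v \<cdot> w \<cdot> a1" .
  then have "h \<cdot> t1 = w \<cdot> a1"
    by (rule v_cancel_w[rotated -1]) (use arrs in simp_all)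
  have "v \<cdot> h \<cdot> t2 = (v \<cdot> h) \<cdot> t2"
    using arrs by simp
  also have "\<dots> = v \<cdot> y \<cdot> a2"
    using eq[symmetric] g_t2 arrs by simp
  finally have "v \<cdot> h \<cdot> t2 = v \<cdot> y \<cdot> a2" .
  then have "h \<cdot> t2 = y \<cdot> a2"
    by (rule v_cancel_y[rotated -1]) (use arrs in simp_all)
  show "g = h"
    by (rule pushout_jointly_epi[OF po]) (use arrs g_t1 g_t2 \<open>h \<cdot> t1 = w \<cdot> a1\<close> \<open>h \<cdot> t2 = y \<cdot> a2\<close> in simp_all)
qed simp

lemma square4_fpc: "fpc C v y x v'"
proof (rule fpc_of_mono[OF square4_pullback mono_x])
  fix x0 y0 z0 w0
  assume test: "arr C x0 (Dom C x0) (Cod C y)" "arr C y0 (Dom C x0) (Cod C y0)"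
    "arr C z0 (Cod C y0) (Cod C v)" "arr C w0 (Dom C x0) (Dom C y)"
    and pb0: "pullback C v z0 x0 y0" and y_w0: "y \<cdot> w0 = x0"
  from test have x0: "x0 \<in> Ar C" "Cod C x0 = Y" and y0: "y0 \<in> Ar C" "Dom C y0 = Dom C x0"
    and z0: "z0 \<in> Ar C" "Dom C z0 = Cod C y0" "Cod C z0 = X"
    and w0: "w0 \<in> Ar C" "Dom C w0 = Dom C x0" "Cod C w0 = Y'"
    by (simp_all add: arr_def)
  obtain e x0' where pbe: "pullback C x0 w e x0'"
    by (rule pullback_exists[of x0 w]) (use x0 in simp_all)
  note arrs = x0 y0 z0 w0 pullback_square[OF pbe]
  have "w \<cdot> x0' = (y \<cdot> w0) \<cdot> e"
    using arrs y_w0 by simp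
  also have "\<dots> = y \<cdot> w0 \<cdot> e"
    using arrs by simp
  finally have comm: "w \<cdot> x0' = y \<cdot> w0 \<cdot> e" .
  obtain w0' where w0': "w0' \<in> Ar C" "Dom C w0' = Dom C x0'" "Cod C w0' = Z'" "z \<cdot> w0' = x0'"
    by (rule pullback_factor[OF square3_pullback, of x0' "w0 \<cdot> e"]) (use arrs comm in simp_all)
  obtain u where "u \<in> Ar C" "Dom C u = Cod C (y0 \<cdot> e)" "Cod C u = X'" "x \<cdot> u = z0"
    by (rule fpc_factor[OF composite_fpc, of x0' "y0 \<cdot> e" z0 w0'])
      (use arrs w0' pullback_paste[OF pb0 pbe] in \<open>simp_all add: arr_def\<close>)
  then show "\<exists>u. u \<in> Ar C \<and> Dom C u = Cod C y0 \<and> Cod C u = Dom C x \<and> x \<cdot> u = z0"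
    using arrs by auto
qed

end

theorem mainTheorem6:
  fixes C :: "('o, 'a) cat"
    and Z' Z Y Y' X X' :: 'o
    and z w w' y v v' x :: 'a
  assumes "adhesive C"
    and "arr C z Z' Z" and "arr C w Z Y" and "arr C w' Z' Y'" and "arr C y Y' Y"
    and "arr C v Y X" and "arr C v' Y' X'" and "arr C x X' X"
    and "Comp C w z = Comp C y w'"
    and "Comp C v y = Comp C x v'"
    and "mono C z" and "mono C w" and "mono C w'" and "mono C y"
    and "mono C v'" and "mono C x"
    and "mono C (Comp C v w)"
    and "pushout C z w' w y"
    and "fpc C (Comp C v w) z x (Comp C v' w')"
  shows "fpc C v y x v' \<and> mono C v"
proof -
  interpret stacked_squares C Z' Z Y Y' X X' z w w' y v v' x
    by unfold_locales (use assms in \<open>simp_all add: adhesive_def\<close>)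
  show ?thesis
    using square4_fpc mono_v by blast
qed

end
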